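(* Let $0<\epsilon<1$ and let $\bar b,\bar w>0$ satisfy $b/2\le \bar b\le 2b$ and $w/6\le \bar w\le 6w$. Then the number of butterflies of $G$ all four of whose edges are non-light (with respect to $\bar b,\bar w,\epsilon$) is at most $c_H\epsilon b$, where $c_H=1.77\times 10^4$.
   Context: Let $G=(V,E)$ be a bipartite graph with bipartition $V=U\cup L$ and $m=|E|$ edges; $d_v$ is the degree of vertex $v$, and for an edge $e=(u,v)$ let $d_e=d_u+d_v-2$. A wedge is a path with two edges; $w$ is the number of wedges of $G$. A butterfly is a set $\{u_1,u_2,v_1,v_2\}$ of distinct vertices with $u_1,u_2\in U$, $v_1,v_2\in L$ such that all four pairs $u_iv_j$ are edges; its edges are these four edges. $b$ is the number of butterflies and $b(e)$ the number of butterflies containing edge $e$. Given $\bar b,\bar w,\epsilon>0$, an edge $e$ is heavy if $b(e)>2\bar b^{3/4}/\epsilon^{1/4}$ or $d_e>\bar w/(\epsilon\bar b)^{1/4}$; it is light if $b(e)<\bar b^{3/4}/(2\epsilon^{1/4})$ and $d_e<\bar w/(\epsilon\bar b)^{1/4}$. An edge is non-light if it is not light (an edge may be neither heavy nor light). *)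

theory Defs
  imports Complex_Main
begin

definition bipartite_graph :: "'a set \<Rightarrow> 'a set \<Rightarrow> ('a \<times> 'a) set \<Rightarrow> bool" where
  "bipartite_graph U L E \<longleftrightarrow> finite U \<and> finite L \<and> U \<inter> L = {} \<and> E \<subseteq> U \<times> L"

definition degree :: "('a \<times> 'a) set \<Rightarrow> 'a \<Rightarrow> nat" where
  "degree E v = card {e \<in> E. fst e = v \<or> snd e = v}"

definition edge_degree :: "('a \<times> 'a) set \<Rightarrow> 'a \<times> 'a \<Rightarrow> real" where
  "edge_degree E e = real (degree E (fst e)) + real (degree E (snd e)) - 2"

definition wedges :: "('a \<times> 'a) set \<Rightarrow> ('a \<times> 'a) set set" where
  "wedges E = {{e1, e2} | e1 e2. e1 \<in> E \<and> e2 \<in> E \<and> e1 \<noteq> e2 \<and>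
      {fst e1, snd e1} \<inter> {fst e2, snd e2} \<noteq> {}}"

definition wedge_count :: "('a \<times> 'a) set \<Rightarrow> nat" where
  "wedge_count E = card (wedges E)"

definition butterflies :: "'a set \<Rightarrow> 'a set \<Rightarrow> ('a \<times> 'a) set \<Rightarrow> 'a set set" where
  "butterflies U L E = {{u1, u2, v1, v2} | u1 u2 v1 v2.
      u1 \<in> U \<and> u2 \<in> U \<and> v1 \<in> L \<and> v2 \<in> L \<and> u1 \<noteq> u2 \<and> v1 \<noteq> v2 \<and>
      (u1, v1) \<in> E \<and> (u1, v2) \<in> E \<and> (u2, v1) \<in> E \<and> (u2, v2) \<in> E}"

definition butterfly_edges :: "('a \<times> 'a) set \<Rightarrow> 'a set \<Rightarrow> ('a \<times> 'a) set" where
  "butterfly_edges E B = {e \<in> E. fst e \<in> B \<and> snd e \<in> B}"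

definition butterfly_count :: "'a set \<Rightarrow> 'a set \<Rightarrow> ('a \<times> 'a) set \<Rightarrow> nat" where
  "butterfly_count U L E = card (butterflies U L E)"

definition edge_butterfly_count :: "'a set \<Rightarrow> 'a set \<Rightarrow> ('a \<times> 'a) set \<Rightarrow> 'a \<times> 'a \<Rightarrow> nat" where
  "edge_butterfly_count U L E e = card {B \<in> butterflies U L E. e \<in> butterfly_edges E B}"

definition light :: "'a set \<Rightarrow> 'a set \<Rightarrow> ('a \<times> 'a) set \<Rightarrow> real \<Rightarrow> real \<Rightarrow> real \<Rightarrow> 'a \<times> 'a \<Rightarrow> bool" where
  "light U L E bb ww eps e \<longleftrightarrow>
     real (edge_butterfly_count U L E e) < bb powr (3/4) / (2 * eps powr (1/4)) \<and>
     edge_degree E e < ww / (eps * bb) powr (1/4)"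

definition heavy :: "'a set \<Rightarrow> 'a set \<Rightarrow> ('a \<times> 'a) set \<Rightarrow> real \<Rightarrow> real \<Rightarrow> real \<Rightarrow> 'a \<times> 'a \<Rightarrow> bool" where
  "heavy U L E bb ww eps e \<longleftrightarrow>
     real (edge_butterfly_count U L E e) > 2 * bb powr (3/4) / eps powr (1/4) \<or>
     edge_degree E e > ww / (eps * bb) powr (1/4)"

end

theory Submission
  imports Defs
begin

text \<open>A non-light edge e has b(e) \<ge> X or d_e \<ge> Y, where X and Y are the two light thresholds.
  Double counting gives \<Sum>b(e) = 4b and \<Sum>d_e = 2w (in a bipartite graph d_e is the number of
  edges sharing an endpoint with e, and every wedge is seen from both of its edges), so by
  Markov's inequality there are at most 4b/X + 2w/Y \<le> 30 (\<epsilon>b)^(1/4) non-light edges.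
  A butterfly all of whose edges lie in an edge set H is determined by an ordered pair of
  opposite edges in H, so there are at most |H|^2/4 of them, hence at most |H|^4/64 because
  |H| \<ge> 4 as soon as there is one. This gives the bound 30^4 \<epsilon>b/64 < 1.77 \<cdot> 10^4 \<epsilon>b.\<close>

lemma bipartite_graph_finite_edges: "bipartite_graph U L E \<Longrightarrow> finite E"
  unfolding bipartite_graph_def by (meson finite_SigmaI finite_subset)

lemma finite_butterflies: "bipartite_graph U L E \<Longrightarrow> finite (butterflies U L E)"
  unfolding bipartite_graph_def butterflies_def
  by (rule finite_subset[of _ "Pow (U \<union> L)"]) auto

lemma card_threshold_mult_le_sum:
  fixes f :: "'b \<Rightarrow> real"
  assumes "finite A" "\<And>x. x \<in> A \<Longrightarrow> 0 \<le> f x"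
  shows "real (card {x \<in> A. t \<le> f x}) * t \<le> sum f A"
proof -
  have "real (card {x \<in> A. t \<le> f x}) * t = (\<Sum>x\<in>{x \<in> A. t \<le> f x}. t)" by simp
  also have "\<dots> \<le> (\<Sum>x\<in>{x \<in> A. t \<le> f x}. f x)" by (rule sum_mono) auto
  also have "\<dots> \<le> sum f A" by (rule sum_mono2) (use assms in auto)
  finally show ?thesis .
qed

lemma butterflyE:
  assumes "bipartite_graph U L E" "B \<in> butterflies U L E"
  obtains u1 u2 v1 v2 where "B = {u1, u2, v1, v2}" "u1 \<in> U" "u2 \<in> U" "v1 \<in> L" "v2 \<in> L"
    "u1 \<noteq> u2" "v1 \<noteq> v2" "butterfly_edges E B = {(u1, v1), (u1, v2), (u2, v1), (u2, v2)}"
proof -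
  obtain u1 u2 v1 v2 where B: "B = {u1, u2, v1, v2}" "u1 \<in> U" "u2 \<in> U" "v1 \<in> L" "v2 \<in> L"
    "u1 \<noteq> u2" "v1 \<noteq> v2" "(u1, v1) \<in> E" "(u1, v2) \<in> E" "(u2, v1) \<in> E" "(u2, v2) \<in> E"
    using assms(2) unfolding butterflies_def by blast
  have "butterfly_edges E B \<subseteq> {u1, u2} \<times> {v1, v2}"
  proof
    fix e assume "e \<in> butterfly_edges E B"
    then have "fst e \<in> B \<inter> U" "snd e \<in> B \<inter> L"
      using assms(1) unfolding butterfly_edges_def bipartite_graph_def by auto
    moreover have "B \<inter> U = {u1, u2}" "B \<inter> L = {v1, v2}"
      using assms(1) B(1-5) unfolding bipartite_graph_def by auto
    ultimately show "e \<in> {u1, u2} \<times> {v1, v2}" unfolding mem_Times_iff by blast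
  qed
  then have "butterfly_edges E B = {(u1, v1), (u1, v2), (u2, v1), (u2, v2)}"
    using B unfolding butterfly_edges_def by auto
  with B show ?thesis using that by blast
qed

lemma card_butterfly_edges:
  assumes "bipartite_graph U L E" "B \<in> butterflies U L E"
  shows "card (butterfly_edges E B) = 4"
  by (rule butterflyE[OF assms]) simp

lemma sum_edge_butterfly_count:
  assumes "bipartite_graph U L E"
  shows "(\<Sum>e\<in>E. edge_butterfly_count U L E e) = 4 * butterfly_count U L E"
  unfolding edge_butterfly_count_def butterfly_count_def
proof (rule sum_multicount)
  show "\<forall>B\<in>butterflies U L E. card {e \<in> E. e \<in> butterfly_edges E B} = 4"
    using card_butterfly_edges[OF assms] by (simp add: butterfly_edges_def)
qed (use assms bipartite_graph_finite_edges finite_butterflies in auto)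

definition adjacent_edges :: "('a \<times> 'a) set \<Rightarrow> 'a \<times> 'a \<Rightarrow> ('a \<times> 'a) set" where
  "adjacent_edges E e = {e' \<in> E. e' \<noteq> e \<and> {fst e, snd e} \<inter> {fst e', snd e'} \<noteq> {}}"

lemma edge_degree_eq_card_adjacent_edges:
  assumes G: "bipartite_graph U L E" and "e \<in> E"
  shows "edge_degree E e = real (card (adjacent_edges E e))"
proof -
  obtain u v where e: "e = (u, v)" by fastforce
  define Du where "Du = {e' \<in> E. fst e' = u \<or> snd e' = u}"
  define Dv where "Dv = {e' \<in> E. fst e' = v \<or> snd e' = v}"
  have fin: "finite Du" "finite Dv" "finite (adjacent_edges E e)"
    using bipartite_graph_finite_edges[OF G] by (auto simp: Du_def Dv_def adjacent_edges_def)
  have "(v, u) \<notin> E"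
    using G \<open>e \<in> E\<close> unfolding bipartite_graph_def e by blast
  then have "Du \<inter> Dv = {e}"
    using \<open>e \<in> E\<close> by (auto simp: Du_def Dv_def e)
  moreover have "Du \<union> Dv = insert e (adjacent_edges E e)"
    using \<open>e \<in> E\<close> by (auto simp: Du_def Dv_def adjacent_edges_def e)
  moreover have "e \<notin> adjacent_edges E e" by (simp add: adjacent_edges_def)
  ultimately have "card Du + card Dv = card (adjacent_edges E e) + 2"
    using card_Un_Int[OF fin(1,2)] fin(3) by simp
  then show ?thesis
    unfolding edge_degree_def degree_def e by (simp add: Du_def Dv_def flip: of_nat_add)
qed

lemma card_wedges_containing_edge:
  assumes "e \<in> E"
  shows "card {W \<in> wedges E. e \<in> W} = card (adjacent_edges E e)"
proof -
  have "{W \<in> wedges E. e \<in> W} = (\<lambda>e'. {e, e'}) ` adjacent_edges E e"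
  proof (intro equalityI subsetI)
    fix W assume "W \<in> {W \<in> wedges E. e \<in> W}"
    then obtain e1 e2 where W: "W = {e1, e2}" "e1 \<in> E" "e2 \<in> E" "e1 \<noteq> e2"
      "{fst e1, snd e1} \<inter> {fst e2, snd e2} \<noteq> {}" "e \<in> W"
      unfolding wedges_def by blast
    show "W \<in> (\<lambda>e'. {e, e'}) ` adjacent_edges E e"
    proof (cases "e = e1")
      case True
      then show ?thesis using W unfolding adjacent_edges_def by blast
    next
      case False
      then have "e = e2" "W = {e, e1}" using W by auto
      then show ?thesis using W unfolding adjacent_edges_def by blast
    qed
  next
    fix W assume "W \<in> (\<lambda>e'. {e, e'}) ` adjacent_edges E e"
    then show "W \<in> {W \<in> wedges E. e \<in> W}"
      using assms unfolding wedges_def adjacent_edges_def by blast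
  qed
  moreover have "inj_on (\<lambda>e'. {e, e'}) (adjacent_edges E e)"
    by (auto simp: inj_on_def doubleton_eq_iff adjacent_edges_def)
  ultimately show ?thesis by (simp add: card_image)
qed

lemma sum_edge_degree:
  assumes G: "bipartite_graph U L E"
  shows "(\<Sum>e\<in>E. edge_degree E e) = 2 * real (wedge_count E)"
proof -
  have fin: "finite E" "finite (wedges E)"
    using bipartite_graph_finite_edges[OF G] by (auto simp: wedges_def intro: finite_subset[of _ "Pow E"])
  have "(\<Sum>e\<in>E. card {W \<in> wedges E. e \<in> W}) = 2 * wedge_count E"
    unfolding wedge_count_def
  proof (rule sum_multicount[OF fin])
    show "\<forall>W\<in>wedges E. card {e \<in> E. e \<in> W} = 2"
    proof
      fix W assume "W \<in> wedges E"
      then obtain e1 e2 where "W = {e1, e2}" "e1 \<in> E" "e2 \<in> E" "e1 \<noteq> e2"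
        unfolding wedges_def by blast
      then have "{e \<in> E. e \<in> W} = {e1, e2}" by auto
      with \<open>e1 \<noteq> e2\<close> show "card {e \<in> E. e \<in> W} = 2" by simp
    qed
  qed
  moreover have "edge_degree E e = real (card {W \<in> wedges E. e \<in> W})" if "e \<in> E" for e
    using edge_degree_eq_card_adjacent_edges[OF G that] card_wedges_containing_edge[OF that] by simp
  ultimately show ?thesis by (simp flip: of_nat_sum)
qed

lemma four_mult_card_butterflies_with_edges_le:
  assumes G: "bipartite_graph U L E"
  shows "4 * card {B \<in> butterflies U L E. \<forall>e\<in>butterfly_edges E B. P e} \<le> card {e \<in> E. P e} ^ 2"
proof -
  define BB where "BB = {B \<in> butterflies U L E. \<forall>e\<in>butterfly_edges E B. P e}"
  define H where "H = {e \<in> E. P e}"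
  define diagonals where "diagonals B =
    {(e, e') \<in> butterfly_edges E B \<times> butterfly_edges E B. fst e \<noteq> fst e' \<and> snd e \<noteq> snd e'}" for B
  have finH: "finite H" using bipartite_graph_finite_edges[OF G] by (simp add: H_def)
  have diag: "card (diagonals B) = 4" "diagonals B \<subseteq> H \<times> H"
    "\<And>p. p \<in> diagonals B \<Longrightarrow> B = {fst (fst p), fst (snd p), snd (fst p), snd (snd p)}"
    if "B \<in> BB" for B
  proof -
    from that have B: "B \<in> butterflies U L E" "butterfly_edges E B \<subseteq> H"
      by (auto simp: BB_def H_def butterfly_edges_def)
    obtain u1 u2 v1 v2 where uv: "B = {u1, u2, v1, v2}" "u1 \<in> U" "u2 \<in> U" "v1 \<in> L" "v2 \<in> L"
      "u1 \<noteq> u2" "v1 \<noteq> v2" and edges: "butterfly_edges E B = {(u1, v1), (u1, v2), (u2, v1), (u2, v2)}"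
      using butterflyE[OF G B(1)] .
    have "diagonals B = {((u1, v1), (u2, v2)), ((u2, v2), (u1, v1)), ((u1, v2), (u2, v1)), ((u2, v1), (u1, v2))}"
      using uv(6,7) unfolding diagonals_def edges by auto
    with uv(6,7) show "card (diagonals B) = 4" "\<And>p. p \<in> diagonals B \<Longrightarrow> B = {fst (fst p), fst (snd p), snd (fst p), snd (snd p)}"
      unfolding uv(1) by auto
    show "diagonals B \<subseteq> H \<times> H" using B(2) unfolding diagonals_def by auto
  qed
  have finBB: "finite BB" using finite_butterflies[OF G] by (simp add: BB_def)
  have "4 * card BB = (\<Sum>B\<in>BB. card (diagonals B))" using diag(1) by simp
  also have "\<dots> = card (\<Union>B\<in>BB. diagonals B)"
  proof (rule card_UN_disjoint[symmetric, OF finBB])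
    show "\<forall>B\<in>BB. finite (diagonals B)"
      using diag(2) finH by (meson finite_SigmaI finite_subset)
    show "\<forall>A\<in>BB. \<forall>B\<in>BB. A \<noteq> B \<longrightarrow> diagonals A \<inter> diagonals B = {}"
      using diag(3) by blast
  qed
  also have "\<dots> \<le> card (H \<times> H)"
    by (rule card_mono) (use finH diag(2) in auto)
  also have "\<dots> = card H ^ 2" by (simp add: card_cartesian_product power2_eq_square)
  finally show ?thesis unfolding BB_def H_def .
qed

lemma card_butterflies_with_edges_le:
  assumes G: "bipartite_graph U L E"
  shows "64 * card {B \<in> butterflies U L E. \<forall>e\<in>butterfly_edges E B. P e} \<le> card {e \<in> E. P e} ^ 4"
proof (cases "{B \<in> butterflies U L E. \<forall>e\<in>butterfly_edges E B. P e} = {}")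
  case False
  define h where "h = card {e \<in> E. P e}"
  obtain B where "B \<in> butterflies U L E" "\<forall>e\<in>butterfly_edges E B. P e"
    using False by blast
  have "butterfly_edges E B \<subseteq> {e \<in> E. P e}"
    using \<open>\<forall>e\<in>butterfly_edges E B. P e\<close> by (auto simp: butterfly_edges_def)
  then have "card (butterfly_edges E B) \<le> h"
    unfolding h_def by (rule card_mono[rotated]) (simp add: bipartite_graph_finite_edges[OF G])
  then have "4 \<le> h" using card_butterfly_edges[OF G \<open>B \<in> butterflies U L E\<close>] by simp
  then have "16 \<le> h ^ 2"
    using power_mono[of 4 h 2] by simp
  have "64 * card {B \<in> butterflies U L E. \<forall>e\<in>butterfly_edges E B. P e}
      = 16 * (4 * card {B \<in> butterflies U L E. \<forall>e\<in>butterfly_edges E B. P e})" by simp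
  also have "\<dots> \<le> h ^ 2 * h ^ 2"
    using four_mult_card_butterflies_with_edges_le[OF G, of P] \<open>16 \<le> h ^ 2\<close> unfolding h_def
    by (intro mult_le_mono)
  also have "\<dots> = h ^ 4" by (simp flip: power_add)
  finally show ?thesis unfolding h_def .
qed (simp only: card.empty)

lemma card_non_light_edges_le:
  assumes G: "bipartite_graph U L E" and "0 < X" "0 < Y"
  shows "real (card {e \<in> E. \<not> (real (edge_butterfly_count U L E e) < X \<and> edge_degree E e < Y)})
           \<le> 4 * real (butterfly_count U L E) / X + 2 * real (wedge_count E) / Y"
proof -
  have finE: "finite E" using bipartite_graph_finite_edges[OF G] .
  define S1 where "S1 = {e \<in> E. X \<le> real (edge_butterfly_count U L E e)}"
  define S2 where "S2 = {e \<in> E. Y \<le> edge_degree E e}"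
  have "real (card S1) * X \<le> (\<Sum>e\<in>E. real (edge_butterfly_count U L E e))"
    unfolding S1_def by (rule card_threshold_mult_le_sum[OF finE]) simp
  also have "\<dots> = 4 * real (butterfly_count U L E)"
    using sum_edge_butterfly_count[OF G] by (simp flip: of_nat_sum)
  finally have S1: "real (card S1) \<le> 4 * real (butterfly_count U L E) / X"
    using \<open>0 < X\<close> by (simp add: pos_le_divide_eq)
  have "real (card S2) * Y \<le> (\<Sum>e\<in>E. edge_degree E e)"
    unfolding S2_def
    by (rule card_threshold_mult_le_sum[OF finE]) (simp add: edge_degree_eq_card_adjacent_edges[OF G])
  also have "\<dots> = 2 * real (wedge_count E)" by (rule sum_edge_degree[OF G])
  finally have S2: "real (card S2) \<le> 2 * real (wedge_count E) / Y"
    using \<open>0 < Y\<close> by (simp add: pos_le_divide_eq)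
  have "{e \<in> E. \<not> (real (edge_butterfly_count U L E e) < X \<and> edge_degree E e < Y)} = S1 \<union> S2"
    unfolding S1_def S2_def by auto
  then have "card {e \<in> E. \<not> (real (edge_butterfly_count U L E e) < X \<and> edge_degree E e < Y)}
      \<le> card S1 + card S2"
    by (simp add: card_Un_le)
  with S1 S2 show ?thesis by linarith
qed

lemma cube_inverse_plus_linear_le:
  fixes r :: real
  assumes "0 < r" "1/2 \<le> r ^ 4" "r ^ 4 \<le> 2"
  shows "8 / r ^ 3 + 12 * r \<le> 30"
proof -
  have le: "x \<le> 6/5" if "x ^ 4 \<le> 2" for x :: real
  proof (rule power_le_imp_le_base[of x 3])
    show "x ^ Suc 3 \<le> (6/5) ^ Suc 3" using that by (simp add: power_divide)
  qed simp
  have "r \<le> 6/5" using le assms by simp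
  moreover have "(1 / r) ^ 4 \<le> 2" using assms by (simp add: power_one_over field_simps)
  then have "1 / r \<le> 6/5" by (rule le)
  then have "(1 / r) ^ 3 \<le> (6/5) ^ 3" using assms(1) by (intro power_mono) auto
  moreover have "8 / r ^ 3 = 8 * (1 / r) ^ 3" by (simp add: power_one_over)
  moreover have "(6/5 :: real) ^ 3 = 216/125" by (simp add: power_divide)
  ultimately show ?thesis by linarith
qed

lemma light_thresholds_sum_le:
  fixes b w bb ww eps :: real
  assumes "0 < eps" "0 < bb" "0 < ww" "b / 2 \<le> bb" "bb \<le> 2 * b" "w \<le> 6 * ww"
  shows "4 * b / (bb powr (3/4) / (2 * eps powr (1/4))) + 2 * w / (ww / (eps * bb) powr (1/4))
           \<le> 30 * (eps * b) powr (1/4)"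
proof -
  have "0 < b" using assms by linarith
  define q where "q = bb powr (1/4)"
  define e4 where "e4 = eps powr (1/4)"
  define b4 where "b4 = b powr (1/4)"
  define r where "r = q / b4"
  have pos: "0 < q" "0 < e4" "0 < b4" "0 < r"
    using assms \<open>0 < b\<close> by (simp_all add: q_def e4_def b4_def r_def)
  have b: "b = b4 ^ 4" and bb: "bb = q ^ 4" and "bb powr (3/4) = q ^ 3"
    using assms \<open>0 < b\<close> by (simp_all add: q_def b4_def powr_power)
  have "(eps * bb) powr (1/4) = e4 * q" "(eps * b) powr (1/4) = e4 * b4"
    using assms \<open>0 < b\<close> by (simp_all add: q_def e4_def b4_def powr_mult)
  have "r ^ 4 = bb / b" using pos unfolding r_def b bb by (simp add: power_divide)
  then have "1/2 \<le> r ^ 4" "r ^ 4 \<le> 2"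
    using assms(4,5) \<open>0 < b\<close> by (simp_all add: le_divide_eq divide_le_eq)
  then have r: "8 / r ^ 3 + 12 * r \<le> 30" by (rule cube_inverse_plus_linear_le[OF pos(4)])
  have "4 * b / (bb powr (3/4) / (2 * eps powr (1/4))) = e4 * b4 * (8 / r ^ 3)"
    using pos unfolding \<open>bb powr (3/4) = q ^ 3\<close> e4_def[symmetric] b r_def
    by (simp add: field_simps eval_nat_numeral)
  moreover have "2 * w / (ww / (eps * bb) powr (1/4)) \<le> e4 * b4 * (12 * r)"
    using pos assms(3,6) unfolding \<open>(eps * bb) powr (1/4) = e4 * q\<close> r_def by (simp add: field_simps)
  ultimately have "4 * b / (bb powr (3/4) / (2 * eps powr (1/4))) + 2 * w / (ww / (eps * bb) powr (1/4))
      \<le> e4 * b4 * (8 / r ^ 3 + 12 * r)" by (simp add: distrib_left)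
  also have "\<dots> \<le> e4 * b4 * 30" using r pos by simp
  finally show ?thesis unfolding \<open>(eps * b) powr (1/4) = e4 * b4\<close> by simp
qed

theorem proposition1:
  fixes U L :: "'a set" and E :: "('a \<times> 'a) set" and bb ww eps :: real
  assumes "bipartite_graph U L E"
    and "0 < eps" and "eps < 1"
    and "0 < bb" and "0 < ww"
    and "real (butterfly_count U L E) / 2 \<le> bb" and "bb \<le> 2 * real (butterfly_count U L E)"
    and "real (wedge_count E) / 6 \<le> ww" and "ww \<le> 6 * real (wedge_count E)"
  shows "real (card {B \<in> butterflies U L E. \<forall>e \<in> butterfly_edges E B. \<not> light U L E bb ww eps e})
           \<le> 1.77 * 10^4 * eps * real (butterfly_count U L E)"
proof -
  define X where "X = bb powr (3/4) / (2 * eps powr (1/4))"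
  define Y where "Y = ww / (eps * bb) powr (1/4)"
  define h where "h = real (card {e \<in> E. \<not> light U L E bb ww eps e})"
  have light: "light U L E bb ww eps e \<longleftrightarrow> real (edge_butterfly_count U L E e) < X \<and> edge_degree E e < Y" for e
    unfolding light_def X_def Y_def ..
  have "0 < real (butterfly_count U L E)" using assms(4,7) by linarith
  have "0 < X" "0 < Y" using assms(2,4,5) by (simp_all add: X_def Y_def)
  then have "h \<le> 4 * real (butterfly_count U L E) / X + 2 * real (wedge_count E) / Y"
    unfolding h_def light by (rule card_non_light_edges_le[OF assms(1)])
  also have "\<dots> \<le> 30 * (eps * real (butterfly_count U L E)) powr (1/4)"
    unfolding X_def Y_def using assms by (intro light_thresholds_sum_le) auto
  finally have "h ^ 4 \<le> (30 * (eps * real (butterfly_count U L E)) powr (1/4)) ^ 4"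
    by (rule power_mono) (simp add: h_def)
  also have "\<dots> = 810000 * eps * real (butterfly_count U L E)"
    using assms(2) \<open>0 < real (butterfly_count U L E)\<close> by (simp add: power_mult_distrib powr_power)
  finally have "h ^ 4 \<le> 810000 * eps * real (butterfly_count U L E)" .
  moreover have "real (64 * card {B \<in> butterflies U L E. \<forall>e \<in> butterfly_edges E B. \<not> light U L E bb ww eps e})
      \<le> real (card {e \<in> E. \<not> light U L E bb ww eps e} ^ 4)"
    using card_butterflies_with_edges_le[OF assms(1)] by (simp only: of_nat_le_iff)
  ultimately show ?thesis by (simp add: h_def)
qed

end
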